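(* Let $(s_0,s_1,\dots)$ be a Markov chain on $\mathcal S$ with transition kernel $p(s'\mid s)$ and initial distribution $\xi_0$. Let $\psi:\mathcal S\to\mathbb R^d$ and suppose there exists $M\in\mathbb R^{d\times d}$ such that $\int_{\mathcal S}\psi(s')^\top p(s'\mid s)\,ds'=\psi(s)^\top M$ for all $s\in\mathcal S$. Let $\Sigma_t:=\mathbb E[\psi(s_t)\psi(s_t)^\top\mid s_0\sim\xi_0]$ and assume $\Sigma_{t+1}$ is positive definite. Then $\|\Sigma_t^{1/2}M\Sigma_{t+1}^{-1/2}\|_2\le1$ for $t=0,1,\dots$.
   Context: $\|\cdot\|_2$ is the spectral norm; $A^{1/2}$ is the positive semidefinite square root of a positive semidefinite matrix $A$. *)

theory Defs
  imports "HOL-Analysis.Analysis" "HOL-Probability.Probability"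
begin

definition spectral_norm :: "real^'n^'m \<Rightarrow> real" where
  "spectral_norm A = onorm (\<lambda>x. A *v x)"

definition psd_matrix :: "real^'n^'n \<Rightarrow> bool" where
  "psd_matrix A \<longleftrightarrow> transpose A = A \<and> (\<forall>x. 0 \<le> x \<bullet> (A *v x))"

definition pd_matrix :: "real^'n^'n \<Rightarrow> bool" where
  "pd_matrix A \<longleftrightarrow> transpose A = A \<and> (\<forall>x. x \<noteq> 0 \<longrightarrow> 0 < x \<bullet> (A *v x))"

definition psd_sqrt :: "real^'n^'n \<Rightarrow> real^'n^'n" where
  "psd_sqrt A = (THE B. psd_matrix B \<and> B ** B = A)"

definition outer :: "real^'n \<Rightarrow> real^'n^'n" where
  "outer x = (\<chi> i j. x $ i * x $ j)"

primrec chain_dist :: "'s measure \<Rightarrow> ('s \<Rightarrow> 's measure) \<Rightarrow> nat \<Rightarrow> 's measure" where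
  "chain_dist xi0 K 0 = xi0"
| "chain_dist xi0 K (Suc t) = chain_dist xi0 K t \<bind> K"

end

theory Submission
  imports Defs
begin

text \<open>
  Let \<open>\<Sigma>\<close> and \<open>\<Sigma>'\<close> be the second moments of \<open>\<psi>\<close> at times \<open>t\<close> and \<open>t + 1\<close>. The hypothesis on
  \<open>M\<close> says that \<open>\<psi>(s) \<bullet> M y\<close> is the mean of \<open>\<psi>(s') \<bullet> y\<close> over one transition from \<open>s\<close>, so
  Jensen's inequality, integrated over the law of \<open>s\<^sub>t\<close>, gives
  \<open>(M y) \<bullet> \<Sigma> (M y) \<le> y \<bullet> \<Sigma>' y\<close> for every \<open>y\<close>. As \<open>x \<bullet> A x = \<parallel>A\<^sup>1\<^sup>/\<^sup>2 x\<parallel>\<^sup>2\<close>, substituting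
  \<open>y = \<Sigma>'\<^sup>-\<^sup>1\<^sup>/\<^sup>2 x\<close> turns this into \<open>\<parallel>\<Sigma>\<^sup>1\<^sup>/\<^sup>2 M \<Sigma>'\<^sup>-\<^sup>1\<^sup>/\<^sup>2 x\<parallel> \<le> \<parallel>x\<parallel>\<close>. The psd square roots are
  built from an orthonormal eigenbasis, obtained by maximising the Rayleigh quotient on
  invariant subspaces.
\<close>

section \<open>Symmetric matrices and their eigenvectors\<close>

lemma symmetric_matrix_iff_self_adjoint:
  fixes A :: "real^'n^'n"
  shows "transpose A = A \<longleftrightarrow> (\<forall>x y. (A *v x) \<bullet> y = x \<bullet> (A *v y))"
proof
  assume "transpose A = A"
  then show "\<forall>x y. (A *v x) \<bullet> y = x \<bullet> (A *v y)"
    by (metis dot_lmul_matrix vector_transpose_matrix)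
next
  assume adj: "\<forall>x y. (A *v x) \<bullet> y = x \<bullet> (A *v y)"
  have "transpose A *v x = A *v x" for x
  proof -
    have "\<forall>y. (transpose A *v x - A *v x) \<bullet> y = 0"
      using adj by (simp add: inner_diff_left transpose_matrix_vector dot_lmul_matrix)
    then show ?thesis by (metis inner_eq_zero_iff eq_iff_diff_eq_0)
  qed
  then show "transpose A = A" by (simp add: matrix_eq)
qed

lemma symmetric_matrix_self_adjoint:
  fixes A :: "real^'n^'n"
  shows "transpose A = A \<Longrightarrow> (A *v x) \<bullet> y = x \<bullet> (A *v y)"
  by (simp add: symmetric_matrix_iff_self_adjoint)

lemma linear_coefficient_zero_if_quadratic_nonpos:
  fixes a d :: real
  assumes "0 \<le> a" and nonpos: "\<And>e. 2 * e * a + e\<^sup>2 * d \<le> 0"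
  shows "a = 0"
proof (rule ccontr)
  assume "a \<noteq> 0"
  with \<open>0 \<le> a\<close> have "a > 0" by simp
  define e where "e = a / (\<bar>d\<bar> + 1)"
  have "e > 0" "e * \<bar>d\<bar> < a"
    using \<open>a > 0\<close> by (auto simp: e_def field_simps)
  have "2 * e * a \<le> e * (e * \<bar>d\<bar>)"
    using nonpos[of e] mult_left_mono[of "-d" "\<bar>d\<bar>" "e\<^sup>2"]
    by (simp add: power2_eq_square algebra_simps) linarith
  with \<open>e > 0\<close> have "2 * a \<le> e * \<bar>d\<bar>" by simp
  with \<open>e * \<bar>d\<bar> < a\<close> \<open>a > 0\<close> show False by simp
qed

text \<open>Perturbing \<open>v\<close> in the direction of the residual \<open>w = A v - \<lambda> v\<close> would increase the
  Rayleigh quotient to first order by \<open>\<parallel>w\<parallel>\<^sup>2\<close>.\<close>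

lemma rayleigh_maximiser_is_eigenvector:
  fixes A :: "real^'n^'n"
  assumes sym: "transpose A = A" and S: "subspace S"
    and inv: "\<And>x. x \<in> S \<Longrightarrow> A *v x \<in> S"
    and vS: "v \<in> S" and vv: "v \<bullet> v = 1"
    and max: "\<And>x. x \<in> S \<Longrightarrow> x \<bullet> (A *v x) \<le> (v \<bullet> (A *v v)) * (x \<bullet> x)"
  shows "A *v v = (v \<bullet> (A *v v)) *\<^sub>R v"
proof -
  define l where "l = v \<bullet> (A *v v)"
  define w where "w = A *v v - l *\<^sub>R v"
  have wS: "w \<in> S" unfolding w_def using inv vS S by (simp add: subspace_diff subspace_scale)
  have wv: "w \<bullet> v = 0" unfolding w_def l_def using vv
    by (simp add: inner_diff_left inner_commute[of "A *v v" v])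
  have wAv: "w \<bullet> (A *v v) = w \<bullet> w"
    using wv by (simp add: w_def inner_diff_left inner_diff_right)
  have Awv: "(A *v w) \<bullet> v = w \<bullet> (A *v v)"
    using sym by (rule symmetric_matrix_self_adjoint)
  have "2 * e * (w \<bullet> w) + e\<^sup>2 * (w \<bullet> (A *v w) - l * (w \<bullet> w)) \<le> 0" for e
  proof -
    have "v + e *\<^sub>R w \<in> S" using vS wS S by (simp add: subspace_add subspace_scale)
    from max[OF this]
    have "l + 2 * e * (w \<bullet> w) + e\<^sup>2 * (w \<bullet> (A *v w)) \<le> l * (1 + e\<^sup>2 * (w \<bullet> w))"
      using vv wv wAv Awv
      by (simp add: matrix_vector_right_distrib matrix_vector_mult_scaleR inner_add_left
          inner_add_right l_def power2_eq_square algebra_simps inner_commute)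
    then show ?thesis by (simp add: algebra_simps)
  qed
  then have "w \<bullet> w = 0"
    by (intro linear_coefficient_zero_if_quadratic_nonpos) simp_all
  then show ?thesis unfolding w_def l_def by simp
qed

lemma symmetric_matrix_eigenvector_in_invariant_subspace:
  fixes A :: "real^'n^'n"
  assumes sym: "transpose A = A" and S: "subspace S"
    and inv: "\<And>x. x \<in> S \<Longrightarrow> A *v x \<in> S" and ne: "S \<noteq> {0}"
  obtains v where "v \<in> S" "norm v = 1" "A *v v = (v \<bullet> (A *v v)) *\<^sub>R v"
proof -
  define K where "K = S \<inter> sphere 0 1"
  have "compact K"
    unfolding K_def using compact_Int_closed[OF compact_sphere closed_subspace[OF S]]
    by (simp add: Int_commute)
  obtain x0 where "x0 \<in> S" "x0 \<noteq> 0" using ne S subspace_0 by blast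
  then have "x0 /\<^sub>R norm x0 \<in> K" unfolding K_def using S by (simp add: subspace_scale)
  then have "K \<noteq> {}" by blast
  have "continuous_on K (\<lambda>x. x \<bullet> (A *v x))"
    by (intro continuous_intros matrix_vector_mult_linear_continuous_on)
  from continuous_attains_sup[OF \<open>compact K\<close> \<open>K \<noteq> {}\<close> this]
  obtain v where v: "v \<in> K" and vmax: "\<And>y. y \<in> K \<Longrightarrow> y \<bullet> (A *v y) \<le> v \<bullet> (A *v v)"
    by blast
  have vS: "v \<in> S" and nv: "norm v = 1" using v unfolding K_def by auto
  have "x \<bullet> (A *v x) \<le> (v \<bullet> (A *v v)) * (x \<bullet> x)" if "x \<in> S" for x
  proof (cases "x = 0")
    case False
    then have "x /\<^sub>R norm x \<in> K" unfolding K_def using that S by (simp add: subspace_scale)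
    from vmax[OF this] have "x \<bullet> (A *v x) / (norm x)\<^sup>2 \<le> v \<bullet> (A *v v)"
      by (simp add: matrix_vector_mult_scaleR power2_eq_square divide_simps)
    then show ?thesis using False by (simp add: divide_simps power2_norm_eq_inner mult.commute)
  qed simp
  with rayleigh_maximiser_is_eigenvector[OF sym S inv vS] nv show thesis
    by (intro that[OF vS nv]) (simp add: norm_eq_1)
qed

lemma span_insert_unit_orthogonal_complement:
  assumes S: "subspace S" and vS: "v \<in> S" and vv: "v \<bullet> v = 1"
    and U: "span U = S \<inter> {x. v \<bullet> x = 0}"
  shows "span (insert v U) = S"
proof
  show "span (insert v U) \<subseteq> S"
    using U vS S span_superset[of U] by (intro span_minimal) auto
  show "S \<subseteq> span (insert v U)"
  proof
    fix x assume xS: "x \<in> S"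
    have "x - (v \<bullet> x) *\<^sub>R v \<in> span U"
      unfolding U using xS vS vv S by (simp add: subspace_diff subspace_scale inner_diff_right)
    then have "x - (v \<bullet> x) *\<^sub>R v \<in> span (insert v U)"
      using span_mono[of U "insert v U"] by auto
    moreover have "(v \<bullet> x) *\<^sub>R v \<in> span (insert v U)"
      by (simp add: span_base span_scale)
    ultimately show "x \<in> span (insert v U)"
      using span_add by fastforce
  qed
qed

lemma symmetric_matrix_orthonormal_eigenbasis_subspace:
  fixes A :: "real^'n^'n"
  assumes sym: "transpose A = A"
  shows "subspace S \<Longrightarrow> (\<And>x. x \<in> S \<Longrightarrow> A *v x \<in> S) \<Longrightarrow>
    \<exists>U. U \<subseteq> S \<and> finite U \<and> pairwise orthogonal U \<and>
        (\<forall>u\<in>U. norm u = 1 \<and> A *v u = (u \<bullet> (A *v u)) *\<^sub>R u) \<and> span U = S"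
proof (induction "dim S" arbitrary: S rule: less_induct)
  case less
  show ?case
  proof (cases "S = {0}")
    case True
    then show ?thesis by (intro exI[of _ "{}"]) auto
  next
    case False
    obtain v where vS: "v \<in> S" and nv: "norm v = 1" and ev: "A *v v = (v \<bullet> (A *v v)) *\<^sub>R v"
      using symmetric_matrix_eigenvector_in_invariant_subspace[OF sym less.prems False] .
    have vv: "v \<bullet> v = 1" using nv by (simp add: norm_eq_1)
    define S' where "S' = S \<inter> {x. v \<bullet> x = 0}"
    have sub': "subspace S'" unfolding S'_def
      by (intro subspace_inter less.prems(1) subspace_hyperplane)
    have inv': "A *v x \<in> S'" if "x \<in> S'" for x
    proof -
      have "v \<bullet> (A *v x) = (v \<bullet> (A *v v)) * (v \<bullet> x)"
        using symmetric_matrix_self_adjoint[OF sym, of v x] ev by (metis inner_scaleR_left)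
      then show ?thesis using that less.prems(2) unfolding S'_def by auto
    qed
    have "S' \<subset> S" unfolding S'_def using vS vv by force
    then have "dim S' < dim S"
      using sub' less.prems(1) by (metis dim_psubset span_eq_iff)
    from less.hyps[OF this sub' inv'] obtain U where
      U: "U \<subseteq> S'" "finite U" "pairwise orthogonal U"
         "\<forall>u\<in>U. norm u = 1 \<and> A *v u = (u \<bullet> (A *v u)) *\<^sub>R u" "span U = S'" by blast
    have "orthogonal v u" "orthogonal u v" if "u \<in> U" for u
      using U(1) that unfolding S'_def orthogonal_def by (auto simp: inner_commute)
    then show ?thesis
      using U vS nv ev span_insert_unit_orthogonal_complement[OF less.prems(1) vS vv]
      unfolding S'_def by (intro exI[of _ "insert v U"]) (auto simp: pairwise_insert)
  qed
qed

lemma symmetric_matrix_orthonormal_eigenbasis: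
  fixes A :: "real^'n^'n"
  assumes "transpose A = A"
  obtains U where "finite U" "pairwise orthogonal U" "\<And>u. u \<in> U \<Longrightarrow> norm u = 1"
    "\<And>u. u \<in> U \<Longrightarrow> A *v u = (u \<bullet> (A *v u)) *\<^sub>R u" "span U = UNIV"
  using symmetric_matrix_orthonormal_eigenbasis_subspace[OF assms subspace_UNIV] by auto

lemma inner_sum_orthonormal:
  fixes U :: "'a::real_inner set"
  assumes "pairwise orthogonal U" "\<And>u. u \<in> U \<Longrightarrow> norm u = 1" "finite U" "u \<in> U"
  shows "u \<bullet> (\<Sum>w\<in>U. c w *\<^sub>R w) = c u"
proof -
  have "u \<bullet> (\<Sum>w\<in>U. c w *\<^sub>R w) = (\<Sum>w\<in>U. if w = u then c w else 0)"
    using assms unfolding inner_sum_right pairwise_def orthogonal_def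
    by (intro sum.cong) (auto simp: norm_eq_1)
  with assms show ?thesis by simp
qed

lemma orthonormal_basis_expansion:
  fixes U :: "'a::euclidean_space set"
  assumes "pairwise orthogonal U" "\<And>u. u \<in> U \<Longrightarrow> norm u = 1" "finite U" "span U = UNIV"
  shows "x = (\<Sum>u\<in>U. (u \<bullet> x) *\<^sub>R u)"
proof -
  define y where "y = x - (\<Sum>u\<in>U. (u \<bullet> x) *\<^sub>R u)"
  have "orthogonal y w" if "w \<in> U" for w
    using inner_sum_orthonormal[OF assms(1-3) that, of "\<lambda>u. u \<bullet> x"]
    unfolding y_def orthogonal_def by (simp add: inner_diff_left inner_diff_right inner_commute[of _ w])
  then have "orthogonal y y" using orthogonal_to_span[of y U y] assms(4) by auto
  then show ?thesis unfolding y_def orthogonal_def by simp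
qed

section \<open>Positive semidefinite square roots\<close>

lemma psd_matrix_self_adjoint:
  "psd_matrix A \<Longrightarrow> (A *v x) \<bullet> y = x \<bullet> (A *v y)"
  by (simp add: psd_matrix_def symmetric_matrix_self_adjoint)

lemma psd_square_root_on_eigenvector:
  fixes B :: "real^'n^'n"
  assumes psd: "psd_matrix B" and sq: "B ** B = A" and ev: "A *v x = l *\<^sub>R x"
  shows "B *v x = sqrt l *\<^sub>R x"
proof (cases "x = 0")
  case False
  have BB: "B *v (B *v y) = A *v y" for y using sq by (metis matrix_vector_mul_assoc)
  have eq: "(B *v x) \<bullet> (B *v x) = l * (x \<bullet> x)"
    using psd_matrix_self_adjoint[OF psd, of x "B *v x"] BB ev by simp
  with False have "l \<ge> 0"
    by (metis inner_ge_zero inner_gt_zero_iff zero_le_mult_iff linorder_not_le)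
  define s where "s = sqrt l"
  have "s \<ge> 0" "s * s = l" using \<open>l \<ge> 0\<close> by (auto simp: s_def)
  define z where "z = B *v x - s *\<^sub>R x"
  have Bz: "B *v z = (- s) *\<^sub>R z"
    unfolding z_def using BB[of x] ev \<open>s * s = l\<close>
    by (simp add: matrix_vector_mult_diff_distrib matrix_vector_mult_scaleR algebra_simps)
  have "0 \<le> z \<bullet> (B *v z)" using psd unfolding psd_matrix_def by blast
  then have "s * (z \<bullet> z) \<le> 0" using Bz by simp
  show ?thesis
  proof (cases "s = 0")
    case True
    then show ?thesis using eq \<open>s * s = l\<close> s_def by simp
  next
    case False
    with \<open>s \<ge> 0\<close> \<open>s * (z \<bullet> z) \<le> 0\<close> have "z \<bullet> z \<le> 0"
      by (simp add: mult_le_0_iff)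
    then have "z = 0" by (metis inner_eq_zero_iff inner_ge_zero order_antisym)
    then show ?thesis unfolding z_def s_def by simp
  qed
qed simp


lemma psd_square_root_exists:
  fixes A :: "real^'n^'n"
  assumes psdA: "psd_matrix A"
  shows "\<exists>B. psd_matrix B \<and> B ** B = A"
proof -
  obtain U where U: "pairwise orthogonal U" "\<And>u. u \<in> U \<Longrightarrow> norm u = 1" "finite U"
      and evU: "\<And>u. u \<in> U \<Longrightarrow> A *v u = (u \<bullet> (A *v u)) *\<^sub>R u" and spanU: "span U = UNIV"
    using symmetric_matrix_orthonormal_eigenbasis psdA unfolding psd_matrix_def by metis
  define r where "r u = sqrt (u \<bullet> (A *v u))" for u
  have r0: "r u \<ge> 0" for u using psdA unfolding psd_matrix_def r_def by simp
  define f where "f x = (\<Sum>u\<in>U. (r u * (u \<bullet> x)) *\<^sub>R u)" for x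
  have "linear f"
    by (rule linearI)
      (simp_all add: f_def inner_add_right distrib_left scaleR_add_left sum.distrib
        scaleR_sum_right mult.left_commute)
  define B where "B = matrix f"
  have Bf: "B *v x = f x" for x
    unfolding B_def using \<open>linear f\<close> by (simp add: matrix_works linear_matrix_vector_mul_eq)
  have quad: "x \<bullet> (B *v y) = (\<Sum>u\<in>U. r u * ((u \<bullet> x) * (u \<bullet> y)))" for x y
    unfolding Bf f_def by (simp add: inner_sum_right inner_commute[of x] mult_ac)
  have psdB: "psd_matrix B"
    unfolding psd_matrix_def symmetric_matrix_iff_self_adjoint
  proof (intro conjI allI)
    show "(B *v x) \<bullet> y = x \<bullet> (B *v y)" for x y
      using quad[of y x] quad[of x y] by (simp add: inner_commute mult.commute)
    show "0 \<le> x \<bullet> (B *v x)" for x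
      unfolding quad using r0 by (intro sum_nonneg) simp
  qed
  have fu: "u \<bullet> f y = r u * (u \<bullet> y)" if "u \<in> U" for u y
    unfolding f_def using inner_sum_orthonormal[OF U that] by simp
  have rr: "r u * r u = u \<bullet> (A *v u)" for u
    using psdA by (simp add: r_def psd_matrix_def)
  have "(B ** B) *v x = A *v x" for x
  proof -
    have "(B ** B) *v x = f (f x)" by (simp add: Bf flip: matrix_vector_mul_assoc)
    also have "\<dots> = (\<Sum>u\<in>U. (r u * r u * (u \<bullet> x)) *\<^sub>R u)"
      unfolding f_def[of "f x"] by (intro sum.cong refl) (simp add: fu mult.assoc)
    also have "\<dots> = (\<Sum>u\<in>U. (u \<bullet> x) *\<^sub>R (A *v u))"
      by (intro sum.cong refl) (subst evU, simp_all add: rr)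
    also have "\<dots> = A *v (\<Sum>u\<in>U. (u \<bullet> x) *\<^sub>R u)"
      by (simp add: vec.sum matrix_vector_mult_scaleR)
    also have "\<dots> = A *v x"
      by (simp flip: orthonormal_basis_expansion[OF U spanU])
    finally show ?thesis .
  qed
  then show ?thesis using psdB by (auto simp: matrix_eq)
qed

text \<open>Every psd square root of \<open>A\<close> acts by \<open>\<surd>\<lambda>\<close> on each \<open>\<lambda>\<close>-eigenvector of \<open>A\<close>, and
  these span the whole space.\<close>

lemma psd_square_root_unique:
  fixes A :: "real^'n^'n"
  assumes "psd_matrix A"
    and B: "psd_matrix B" "B ** B = A" and C: "psd_matrix C" "C ** C = A"
  shows "B = C"
proof -
  obtain U where evU: "\<And>u. u \<in> U \<Longrightarrow> A *v u = (u \<bullet> (A *v u)) *\<^sub>R u" and spanU: "span U = UNIV"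
    using symmetric_matrix_orthonormal_eigenbasis assms(1) unfolding psd_matrix_def by metis
  have "B *v u = C *v u" if "u \<in> U" for u
    using psd_square_root_on_eigenvector[OF B evU[OF that]]
      psd_square_root_on_eigenvector[OF C evU[OF that]] by simp
  then have "B *v x = C *v x" for x
    using linear_eq_on_span[OF matrix_vector_mul_linear matrix_vector_mul_linear] spanU
    by blast
  then show ?thesis by (simp add: matrix_eq)
qed

lemma psd_sqrt:
  fixes A :: "real^'n^'n"
  assumes "psd_matrix A"
  shows "psd_matrix (psd_sqrt A)" "psd_sqrt A ** psd_sqrt A = A"
proof -
  have "\<exists>!B. psd_matrix B \<and> B ** B = A"
    using psd_square_root_exists psd_square_root_unique assms by blast
  then have "psd_matrix (psd_sqrt A) \<and> psd_sqrt A ** psd_sqrt A = A"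
    unfolding psd_sqrt_def by (rule theI')
  then show "psd_matrix (psd_sqrt A)" "psd_sqrt A ** psd_sqrt A = A" by simp_all
qed


lemma norm_psd_sqrt_mult_vector:
  fixes A :: "real^'n^'n"
  assumes "psd_matrix A"
  shows "(norm (psd_sqrt A *v x))\<^sup>2 = x \<bullet> (A *v x)"
proof -
  have "(norm (psd_sqrt A *v x))\<^sup>2 = x \<bullet> (psd_sqrt A *v (psd_sqrt A *v x))"
    using psd_matrix_self_adjoint[OF psd_sqrt(1)[OF assms]] by (simp add: power2_norm_eq_inner)
  also have "\<dots> = x \<bullet> (A *v x)"
    by (simp add: matrix_vector_mul_assoc psd_sqrt(2)[OF assms])
  finally show ?thesis .
qed

lemma pd_matrix_imp_psd_matrix: "pd_matrix A \<Longrightarrow> psd_matrix A"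
  unfolding pd_matrix_def psd_matrix_def by (metis inner_zero_left less_imp_le order_refl)

lemma pd_matrix_invertible:
  fixes A :: "real^'n^'n"
  assumes "pd_matrix A"
  shows "invertible A"
proof -
  have "inj ((*v) A)"
  proof (rule injI)
    fix x y assume "A *v x = A *v y"
    then have "(x - y) \<bullet> (A *v (x - y)) = 0" by (simp add: matrix_vector_mult_diff_distrib)
    with assms show "x = y" unfolding pd_matrix_def by (metis eq_iff_diff_eq_0 less_irrefl)
  qed
  then show ?thesis
    by (simp add: invertible_eq_bij bij_def linear_inj_imp_surj[OF matrix_vector_mul_linear])
qed

lemma psd_sqrt_invertible:
  fixes A :: "real^'n^'n"
  assumes "pd_matrix A"
  shows "invertible (psd_sqrt A)"
proof -
  obtain A' where "A ** A' = mat 1" using pd_matrix_invertible[OF assms] invertible_def by blast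
  then have "psd_sqrt A ** (psd_sqrt A ** A') = mat 1"
    using psd_sqrt(2)[OF pd_matrix_imp_psd_matrix[OF assms]] by (simp add: matrix_mul_assoc)
  then show ?thesis using invertible_right_inverse by blast
qed

lemma matrix_inv_right: "invertible A \<Longrightarrow> A ** matrix_inv A = mat 1"
  unfolding invertible_def matrix_inv_def by (rule someI_ex[THEN conjunct1])

lemma spectral_norm_le_one_if_quadratic_form_le:
  fixes A :: "real^'n^'n" and B :: "real^'m^'m" and M :: "real^'m^'n"
  assumes A: "psd_matrix A" and B: "pd_matrix B"
    and le: "\<And>y. (M *v y) \<bullet> (A *v (M *v y)) \<le> y \<bullet> (B *v y)"
  shows "spectral_norm (psd_sqrt A ** M ** matrix_inv (psd_sqrt B)) \<le> 1"
  unfolding spectral_norm_def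
proof (rule onorm_le)
  fix x
  define y where "y = matrix_inv (psd_sqrt B) *v x"
  have Ty: "psd_sqrt B *v y = x"
    using matrix_inv_right[OF psd_sqrt_invertible[OF B]]
    by (simp add: y_def matrix_vector_mul_assoc)
  have "(psd_sqrt A ** M ** matrix_inv (psd_sqrt B)) *v x = psd_sqrt A *v (M *v y)"
    by (simp add: y_def matrix_vector_mul_assoc matrix_mul_assoc)
  then have "(norm ((psd_sqrt A ** M ** matrix_inv (psd_sqrt B)) *v x))\<^sup>2
      = (M *v y) \<bullet> (A *v (M *v y))"
    by (simp add: norm_psd_sqrt_mult_vector[OF A])
  also have "\<dots> \<le> y \<bullet> (B *v y)" by (rule le)
  also have "\<dots> = (norm x)\<^sup>2"
    using norm_psd_sqrt_mult_vector[OF pd_matrix_imp_psd_matrix[OF B], of y] Ty by simp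
  finally show "norm ((psd_sqrt A ** M ** matrix_inv (psd_sqrt B)) *v x) \<le> 1 * norm x"
    using power2_le_imp_le by simp
qed


section \<open>Second moments of a Markov chain\<close>

lemma bind_in_space_prob_algebra:
  assumes "\<mu> \<in> space (prob_algebra N)" "K \<in> N \<rightarrow>\<^sub>M prob_algebra N"
  shows "\<mu> \<bind> K \<in> space (prob_algebra N)"
  using prob_space_bind'[OF assms] sets_bind'[OF assms] by (simp add: space_prob_algebra)

lemma chain_dist_in_space_prob_algebra:
  assumes "xi0 \<in> space (prob_algebra N)" "K \<in> N \<rightarrow>\<^sub>M prob_algebra N"
  shows "chain_dist xi0 K n \<in> space (prob_algebra N)"
  by (induction n) (simp_all add: assms bind_in_space_prob_algebra)

lemma outer_mult_vector_inner: "(outer p *v x) \<bullet> y = (p \<bullet> x) * (p \<bullet> y)"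
  by (simp add: outer_def inner_vec_def matrix_vector_mult_def sum_distrib_left sum_distrib_right mult_ac)

lemma bounded_linear_matrix_bilinear_form: "bounded_linear (\<lambda>A::real^'n^'m. (A *v x) \<bullet> y)"
proof -
  have "(\<lambda>A::real^'n^'m. (A *v x) \<bullet> y) = (\<lambda>A. \<Sum>i\<in>UNIV. \<Sum>j\<in>UNIV. A $ i $ j * (x $ j * y $ i))"
    by (auto simp: inner_vec_def matrix_vector_mult_def sum_distrib_right sum_distrib_left mult_ac)
  moreover have "bounded_linear (\<lambda>A::real^'n^'m. A $ i $ j * c)" for i j c
    by (rule bounded_linear_compose[OF bounded_linear_mult_left
          bounded_linear_compose[OF bounded_linear_vec_nth bounded_linear_vec_nth]])
  ultimately show ?thesis by (simp add: bounded_linear_sum)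
qed

lemma
  fixes \<psi> :: "'s \<Rightarrow> real^'d"
  assumes "integrable \<mu> (\<lambda>s. outer (\<psi> s))"
  shows integrable_outer_bilinear_form: "integrable \<mu> (\<lambda>s. (\<psi> s \<bullet> x) * (\<psi> s \<bullet> y))"
    and integral_outer_bilinear_form:
      "(integral\<^sup>L \<mu> (\<lambda>s. outer (\<psi> s)) *v x) \<bullet> y = (LINT s|\<mu>. (\<psi> s \<bullet> x) * (\<psi> s \<bullet> y))"
  using integrable_bounded_linear[OF bounded_linear_matrix_bilinear_form assms]
    integral_bounded_linear[OF bounded_linear_matrix_bilinear_form assms]
  by (simp_all add: outer_mult_vector_inner)

lemma psd_matrix_integral_outer:
  fixes \<psi> :: "'s \<Rightarrow> real^'d"
  assumes "integrable \<mu> (\<lambda>s. outer (\<psi> s))"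
  shows "psd_matrix (integral\<^sup>L \<mu> (\<lambda>s. outer (\<psi> s)))"
  unfolding psd_matrix_def symmetric_matrix_iff_self_adjoint
proof (intro conjI allI)
  show "(integral\<^sup>L \<mu> (\<lambda>s. outer (\<psi> s)) *v x) \<bullet> y = x \<bullet> (integral\<^sup>L \<mu> (\<lambda>s. outer (\<psi> s)) *v y)"
    for x y
    by (simp add: inner_commute[of x] integral_outer_bilinear_form[OF assms] mult.commute)
  show "0 \<le> x \<bullet> (integral\<^sup>L \<mu> (\<lambda>s. outer (\<psi> s)) *v x)" for x
    by (simp add: inner_commute[of x] integral_outer_bilinear_form[OF assms])
qed

lemma power2_integral_le_nn_integral_power2:
  assumes "prob_space F" "integrable F f"
  shows "ennreal ((integral\<^sup>L F f)\<^sup>2) \<le> (\<integral>\<^sup>+ x. ennreal ((f x)\<^sup>2) \<partial>F)"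
proof (cases "integrable F (\<lambda>x. (f x)\<^sup>2)")
  case True
  have "(integral\<^sup>L F f)\<^sup>2 \<le> (LINT x|F. (f x)\<^sup>2)"
    using prob_space.variance_eq[OF assms True] prob_space.variance_positive[OF assms(1), of f]
    by simp
  also have "ennreal \<dots> = (\<integral>\<^sup>+ x. ennreal ((f x)\<^sup>2) \<partial>F)"
    by (rule nn_integral_eq_integral[symmetric]) (use True in auto)
  finally show ?thesis by (simp add: ennreal_leI)
next
  case False
  have "(\<lambda>x. (f x)\<^sup>2) \<in> borel_measurable F" using assms(2) by measurable
  then have "\<not> (\<integral>\<^sup>+ x. ennreal (norm ((f x)\<^sup>2)) \<partial>F) < \<infinity>"
    using integrableI_bounded False by blast
  then show ?thesis by (simp add: less_top[symmetric])
qed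

lemma power2_inner_mean_le_nn_integral:
  fixes \<psi> :: "'s \<Rightarrow> real^'d"
  assumes "prob_space P" "integrable P \<psi>" "integral\<^sup>L P \<psi> = p v* M"
  shows "ennreal ((p \<bullet> (M *v y))\<^sup>2) \<le> (\<integral>\<^sup>+ x. ennreal ((\<psi> x \<bullet> y)\<^sup>2) \<partial>P)"
proof -
  have "p \<bullet> (M *v y) = integral\<^sup>L P \<psi> \<bullet> y"
    by (simp add: assms(3) dot_lmul_matrix)
  also have "\<dots> = (LINT x|P. \<psi> x \<bullet> y)"
    by (rule integral_bounded_linear[OF bounded_linear_inner_left assms(2), symmetric])
  finally show ?thesis
    using power2_integral_le_nn_integral_power2[OF assms(1)
        integrable_bounded_linear[OF bounded_linear_inner_left assms(2)]]
    by (simp only:)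
qed

lemma second_moment_bind_dominates:
  fixes \<mu> :: "'s measure" and \<psi> :: "'s \<Rightarrow> real^'d" and M :: "real^'d^'d"
  assumes \<mu>: "\<mu> \<in> space (prob_algebra N)" and K: "K \<in> N \<rightarrow>\<^sub>M prob_algebra N"
    and psi_meas: "\<psi> \<in> borel_measurable N"
    and psi_int: "\<And>s. s \<in> space N \<Longrightarrow> integrable (K s) \<psi>"
    and M_prop: "\<And>s. s \<in> space N \<Longrightarrow> integral\<^sup>L (K s) \<psi> = \<psi> s v* M"
    and int: "integrable \<mu> (\<lambda>s. outer (\<psi> s))"
    and int_bind: "integrable (\<mu> \<bind> K) (\<lambda>s. outer (\<psi> s))"
  shows "(M *v y) \<bullet> (integral\<^sup>L \<mu> (\<lambda>s. outer (\<psi> s)) *v (M *v y))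
      \<le> y \<bullet> (integral\<^sup>L (\<mu> \<bind> K) (\<lambda>s. outer (\<psi> s)) *v y)"
proof -
  define g where "g s = (\<psi> s \<bullet> y)\<^sup>2" for s
  define h where "h s = (\<psi> s \<bullet> (M *v y))\<^sup>2" for s
  have space_\<mu>: "space \<mu> = space N"
    using \<mu> by (intro sets_eq_imp_space_eq) (simp add: space_prob_algebra)
  have pointwise: "ennreal (h s) \<le> (\<integral>\<^sup>+ x. ennreal (g x) \<partial>K s)" if "s \<in> space N" for s
    using measurable_space[OF K that] psi_int[OF that] M_prop[OF that] unfolding g_def h_def
    by (intro power2_inner_mean_le_nn_integral) (simp_all add: space_prob_algebra)
  have "ennreal (integral\<^sup>L \<mu> h) = (\<integral>\<^sup>+ s. ennreal (h s) \<partial>\<mu>)"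
    using integrable_outer_bilinear_form[OF int, of "M *v y" "M *v y"] unfolding h_def
    by (intro nn_integral_eq_integral[symmetric]) (simp_all add: power2_eq_square)
  also have "\<dots> \<le> (\<integral>\<^sup>+ s. (\<integral>\<^sup>+ x. ennreal (g x) \<partial>K s) \<partial>\<mu>)"
    using pointwise by (intro nn_integral_mono) (simp add: space_\<mu>)
  also have "\<dots> = (\<integral>\<^sup>+ x. ennreal (g x) \<partial>(\<mu> \<bind> K))"
  proof (rule nn_integral_bind[symmetric])
    show "(\<lambda>x. ennreal (g x)) \<in> borel_measurable N" unfolding g_def using psi_meas by measurable
    show "K \<in> \<mu> \<rightarrow>\<^sub>M subprob_algebra N"
      using measurable_prob_algebraD[OF K] \<mu>
      by (simp add: space_prob_algebra cong: measurable_cong_sets)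
  qed
  also have "\<dots> = ennreal (integral\<^sup>L (\<mu> \<bind> K) g)"
    using integrable_outer_bilinear_form[OF int_bind, of y y] unfolding g_def
    by (intro nn_integral_eq_integral) (simp_all add: power2_eq_square)
  finally have "integral\<^sup>L \<mu> h \<le> integral\<^sup>L (\<mu> \<bind> K) g"
    by (simp add: ennreal_le_iff g_def integral_nonneg_AE)
  then show ?thesis unfolding g_def h_def
    by (simp add: inner_commute[of "M *v y"] inner_commute[of y] integral_outer_bilinear_form
        int int_bind power2_eq_square)
qed

theorem lemma1:
  fixes N :: "'s measure" and K :: "'s \<Rightarrow> 's measure" and xi0 :: "'s measure"
    and \<psi> :: "'s \<Rightarrow> real^'d" and M :: "real^'d^'d" and t :: nat
  defines "\<Sigma> \<equiv> (\<lambda>n. integral\<^sup>L (chain_dist xi0 K n) (\<lambda>s. outer (\<psi> s)))"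
  assumes xi0_prob: "prob_space xi0" and xi0_sets: "sets xi0 = sets N"
    and K_meas: "K \<in> N \<rightarrow>\<^sub>M prob_algebra N"
    and psi_meas: "\<psi> \<in> borel_measurable N"
    and psi_int: "\<And>s. s \<in> space N \<Longrightarrow> integrable (K s) \<psi>"
    and M_prop: "\<And>s. s \<in> space N \<Longrightarrow> integral\<^sup>L (K s) \<psi> = \<psi> s v* M"
    and outer_int: "\<And>n. integrable (chain_dist xi0 K n) (\<lambda>s. outer (\<psi> s))"
    and pd: "pd_matrix (\<Sigma> (Suc t))"
  shows "spectral_norm (psd_sqrt (\<Sigma> t) ** M ** matrix_inv (psd_sqrt (\<Sigma> (Suc t)))) \<le> 1"
proof (rule spectral_norm_le_one_if_quadratic_form_le[OF _ pd])
  show "psd_matrix (\<Sigma> t)"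
    unfolding \<Sigma>_def by (rule psd_matrix_integral_outer[OF outer_int])
  have "xi0 \<in> space (prob_algebra N)"
    using xi0_prob xi0_sets by (simp add: space_prob_algebra)
  then have "chain_dist xi0 K t \<in> space (prob_algebra N)"
    by (rule chain_dist_in_space_prob_algebra[OF _ K_meas])
  from second_moment_bind_dominates[OF this K_meas psi_meas psi_int M_prop outer_int]
  show "(M *v y) \<bullet> (\<Sigma> t *v (M *v y)) \<le> y \<bullet> (\<Sigma> (Suc t) *v y)" for y
    using outer_int[of "Suc t"] unfolding \<Sigma>_def by simp
qed

end
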